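(* Let $M=(\mathbb N_0\times\mathbb N_0)\cup(\mathbb Z\times\mathbb N_{\ge2})\subseteq\mathbb Z^2$ and let $R=\mathbb R[x,y;M]$ be the monoid algebra of $M$ over $\mathbb R$ (monomials $x^ay^b$ with $(a,b)\in M$). Then $R$ is an IDF domain and is almost atomic, but $R$ is not atomic (in particular $R$ is not an FFD).
   Context: For an integral domain $R$: an irreducible is a nonzero nonunit $a$ with $a=uv$ forcing $u$ or $v$ a unit; an element is atomic if it is a unit or a finite product of irreducibles; $R$ is atomic if every nonzero element is atomic; $R$ is almost atomic if for every nonzero $b\in R$ there is an atomic element $a$ such that $ab$ is atomic; $R$ is an IDF domain if every nonzero element is divisible by only finitely many irreducibles up to associates; $R$ is an FFD if it is atomic and each nonzero element has finitely many factorizations up to order and associates. *)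

theory Defs
  imports Complex_Main "HOL-Library.Poly_Mapping" "HOL-Library.Product_Plus" "HOL-Library.Multiset"
begin

(* Ambient ring: Laurent polynomials in x,y over the reals, i.e. finitely supported
   functions Z^2 -> R with convolution product; (a,b) stands for x^a y^b. *)

definition M :: "(int \<times> int) set" where
  "M = {(a,b). (a \<ge> 0 \<and> b \<ge> 0) \<or> b \<ge> 2}"

definition Ralg :: "((int \<times> int) \<Rightarrow>\<^sub>0 real) set" where
  "Ralg = {p. Poly_Mapping.keys p \<subseteq> M}"

definition integral_domain_in :: "'a::comm_ring_1 set \<Rightarrow> bool" where
  "integral_domain_in S \<longleftrightarrow> 0 \<in> S \<and> 1 \<in> S \<and> (0::'a) \<noteq> 1 \<and>
     (\<forall>a\<in>S. \<forall>b\<in>S. a + b \<in> S \<and> a * b \<in> S) \<and> (\<forall>a\<in>S. - a \<in> S) \<and>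
     (\<forall>a\<in>S. \<forall>b\<in>S. a * b = 0 \<longrightarrow> a = 0 \<or> b = 0)"

definition unit_in :: "'a::comm_ring_1 set \<Rightarrow> 'a \<Rightarrow> bool" where
  "unit_in S u \<longleftrightarrow> u \<in> S \<and> (\<exists>v\<in>S. u * v = 1)"

definition dvd_in :: "'a::comm_ring_1 set \<Rightarrow> 'a \<Rightarrow> 'a \<Rightarrow> bool" where
  "dvd_in S a b \<longleftrightarrow> a \<in> S \<and> b \<in> S \<and> (\<exists>c\<in>S. b = a * c)"

definition assoc_in :: "'a::comm_ring_1 set \<Rightarrow> 'a \<Rightarrow> 'a \<Rightarrow> bool" where
  "assoc_in S a b \<longleftrightarrow> dvd_in S a b \<and> dvd_in S b a"

definition irreducible_in :: "'a::comm_ring_1 set \<Rightarrow> 'a \<Rightarrow> bool" where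
  "irreducible_in S a \<longleftrightarrow> a \<in> S \<and> a \<noteq> 0 \<and> \<not> unit_in S a \<and>
     (\<forall>u\<in>S. \<forall>v\<in>S. a = u * v \<longrightarrow> unit_in S u \<or> unit_in S v)"

definition factorization_in :: "'a::comm_ring_1 set \<Rightarrow> 'a \<Rightarrow> 'a list \<Rightarrow> bool" where
  "factorization_in S a xs \<longleftrightarrow> (\<forall>x\<in>set xs. irreducible_in S x) \<and> prod_list xs = a"

definition atomic_elem :: "'a::comm_ring_1 set \<Rightarrow> 'a \<Rightarrow> bool" where
  "atomic_elem S a \<longleftrightarrow> unit_in S a \<or> (\<exists>xs. xs \<noteq> [] \<and> factorization_in S a xs)"

definition atomic_dom :: "'a::comm_ring_1 set \<Rightarrow> bool" where
  "atomic_dom S \<longleftrightarrow> (\<forall>a\<in>S. a \<noteq> 0 \<longrightarrow> atomic_elem S a)"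

definition almost_atomic_dom :: "'a::comm_ring_1 set \<Rightarrow> bool" where
  "almost_atomic_dom S \<longleftrightarrow>
     (\<forall>b\<in>S. b \<noteq> 0 \<longrightarrow> (\<exists>a\<in>S. atomic_elem S a \<and> atomic_elem S (a * b)))"

definition IDF_dom :: "'a::comm_ring_1 set \<Rightarrow> bool" where
  "IDF_dom S \<longleftrightarrow> integral_domain_in S \<and>
     (\<forall>a\<in>S. a \<noteq> 0 \<longrightarrow> (\<exists>F. finite F \<and>
        (\<forall>p. irreducible_in S p \<and> dvd_in S p a \<longrightarrow> (\<exists>q\<in>F. assoc_in S p q))))"

definition fact_equiv :: "'a::comm_ring_1 set \<Rightarrow> 'a list \<Rightarrow> 'a list \<Rightarrow> bool" where
  "fact_equiv S xs ys \<longleftrightarrow> (\<exists>zs. mset zs = mset ys \<and> list_all2 (assoc_in S) xs zs)"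

definition FFD_dom :: "'a::comm_ring_1 set \<Rightarrow> bool" where
  "FFD_dom S \<longleftrightarrow> integral_domain_in S \<and> atomic_dom S \<and>
     (\<forall>a\<in>S. a \<noteq> 0 \<longrightarrow> (\<exists>F. finite F \<and>
        (\<forall>xs. factorization_in S a xs \<longrightarrow> (\<exists>ys\<in>F. fact_equiv S xs ys))))"

end

theory Submission
  imports Defs "HOL-Computational_Algebra.Polynomial_Factorial" "HOL-Computational_Algebra.Field_as_Ring"
begin

text \<open>
  Every nonzero Laurent polynomial is \<open>x\<^sup>a y\<^sup>b f\<close> with \<open>f \<in> \<real>[x, y]\<close> divisible by neither \<open>x\<close>
  nor \<open>y\<close>, and the units of \<open>R = \<real>[x, y; M]\<close> are the nonzero constants. Divisors of monomials are
  monomials, and an irreducible monomial has nonnegative \<open>x\<close>-exponent (otherwise \<open>x\<close> splits off), so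
  \<open>x\<^sup>-\<^sup>1 y\<^sup>2\<close> has no factorization and \<open>R\<close> is not atomic.

  An irreducible divisor \<open>x\<^sup>a y\<^sup>b d\<close> of \<open>x\<^sup>s y\<^sup>t f\<close> has \<open>d\<close> dividing \<open>f\<close> in the UFD \<open>\<real>[x, y]\<close>. Moreover
  \<open>a \<le> 1\<close> and \<open>b \<le> 1\<close>, for otherwise all its exponents could be lowered in \<open>x\<close> within \<open>M\<close>, making
  it divisible by \<open>x\<close>; since the monomial \<open>x\<^sup>a\<^sup>+\<^sup>m y\<^sup>b\<close> with \<open>m = deg d(x, 0)\<close> occurs in it, \<open>a\<close> and \<open>b\<close>
  are bounded below as well. Up to associates this leaves finitely many candidates.

  For almost atomicity, a prime \<open>r\<close> of \<open>\<real>[x, y]\<close> not associated to \<open>x\<close> or \<open>y\<close> yields the irreducible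
  \<open>x\<^sup>-\<^sup>K r\<close> of \<open>R\<close> with \<open>K\<close> maximal; so multiplying any nonzero element of \<open>R\<close> by a suitable power
  of \<open>x\<close> makes it a constant times a product of \<open>x\<close>, \<open>y\<close> and such irreducibles.
\<close>

context
  fixes S :: "'a::comm_ring_1 set"
  assumes mult_closed: "\<And>a b. a \<in> S \<Longrightarrow> b \<in> S \<Longrightarrow> a * b \<in> S"
begin

lemma unit_in_mult: "unit_in S u \<Longrightarrow> unit_in S w \<Longrightarrow> unit_in S (u * w)"
  unfolding unit_in_def by (metis mult.assoc mult.left_commute mult_1_right mult_closed)

lemma unit_in_inverseE:
  assumes "unit_in S u"
  obtains v where "unit_in S v" "v * u = 1"
  using assms unfolding unit_in_def by (metis mult.commute)

lemma irreducible_in_unit_mult: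
  assumes irr: "irreducible_in S a" and u: "unit_in S u"
  shows "irreducible_in S (u * a)"
proof -
  obtain v where v: "unit_in S v" "v * u = 1" using u by (rule unit_in_inverseE)
  have cancel: "v * (u * b) = b" for b by (simp add: mult.assoc[symmetric] v(2))
  have aS: "a \<in> S" "a \<noteq> 0" "\<not> unit_in S a" using irr by (auto simp: irreducible_in_def)
  show ?thesis
    unfolding irreducible_in_def
  proof (intro conjI ballI impI)
    show "u * a \<in> S" using aS u by (auto simp: unit_in_def mult_closed)
    show "u * a \<noteq> 0" using cancel[of a] aS by auto
    show "\<not> unit_in S (u * a)" using unit_in_mult[OF v(1)] cancel[of a] aS by metis
    fix b c assume bc: "b \<in> S" "c \<in> S" "u * a = b * c"
    have "a = (v * b) * c" using cancel[of a] bc(3) by (simp add: mult.assoc)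
    moreover have "v * b \<in> S" using v bc by (auto simp: unit_in_def mult_closed)
    ultimately have "unit_in S (v * b) \<or> unit_in S c" using irr bc by (auto simp: irreducible_in_def)
    then show "unit_in S b \<or> unit_in S c"
      using unit_in_mult[OF u, of "v * b"] cancel[of b] by (auto simp: mult.left_commute)
  qed
qed

lemma atomic_elem_unit_mult_prod:
  assumes "\<forall>x\<in>set xs. irreducible_in S x" "unit_in S u"
  shows "atomic_elem S (u * prod_list xs)"
proof (cases xs)
  case (Cons x ys)
  then have "factorization_in S (u * prod_list xs) (u * x # ys)"
    using assms irreducible_in_unit_mult by (auto simp: factorization_in_def mult.assoc)
  then show ?thesis unfolding atomic_elem_def by blast
qed (use assms in \<open>simp add: atomic_elem_def\<close>)

lemma assoc_in_unit_mult: "a \<in> S \<Longrightarrow> unit_in S u \<Longrightarrow> assoc_in S (u * a) a"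
  unfolding assoc_in_def dvd_in_def
  by (metis unit_in_inverseE mult.assoc mult.commute mult_1_left mult_closed unit_in_def)

end

lemma finite_submultisets: "finite {A. A \<subseteq># B}"
proof (rule finite_subset)
  show "{A. A \<subseteq># B} \<subseteq> (\<Union>n\<le>size B. multisets_of_size (set_mset B) n)"
    by (auto simp: multisets_of_size_def size_mset_mono dest: mset_subset_eqD)
qed auto

lemma finite_normalized_divisors:
  fixes x :: "'a::factorial_semiring"
  assumes "x \<noteq> 0"
  shows "finite {d. d dvd x \<and> normalize d = d}"
proof (rule finite_subset)
  show "{d. d dvd x \<and> normalize d = d} \<subseteq> (normalize \<circ> prod_mset) ` {A. A \<subseteq># prime_factorization x}"
  proof
    fix d assume d: "d \<in> {d. d dvd x \<and> normalize d = d}"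
    then have "d \<noteq> 0" using assms by auto
    with d have "prime_factorization d \<subseteq># prime_factorization x"
      "d = normalize (prod_mset (prime_factorization d))"
      using prime_factorization_subset_iff_dvd[OF _ assms] prod_mset_prime_factorization_weak[of d]
      by auto
    then show "d \<in> (normalize \<circ> prod_mset) ` {A. A \<subseteq># prime_factorization x}" by auto
  qed
qed (simp add: finite_submultisets)

lemma poly_mult_eq_monomE:
  fixes p q :: "'a::idom poly"
  assumes pq: "p * q = monom r j" and "r \<noteq> 0"
  obtains c d where "p = monom c d" "c \<noteq> 0"
proof -
  have "p \<noteq> 0" "q \<noteq> 0" using assms by auto
  have "order 0 p + order 0 q = degree p + degree q"
    using order_mult[of p q 0] degree_mult_eq[of p q] pq assms(2) \<open>p \<noteq> 0\<close> \<open>q \<noteq> 0\<close>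
    by (simp add: degree_monom_eq)
  moreover have "order 0 p \<le> degree p" "order 0 q \<le> degree q"
    using order_degree \<open>p \<noteq> 0\<close> \<open>q \<noteq> 0\<close> by auto
  ultimately have "monom 1 (degree p) dvd p" using monom_1_dvd_iff[OF \<open>p \<noteq> 0\<close>] by simp
  then obtain w where w: "p = monom 1 (degree p) * w" by blast
  with \<open>p \<noteq> 0\<close> have "degree w = 0"
    by (metis add_cancel_left_right degree_monom_eq degree_mult_eq monom_eq_0_iff mult_zero_right one_neq_zero)
  then obtain c where "w = [:c:]" by (rule degree_eq_zeroE)
  with w have "p = monom c (degree p)" by (simp add: monom_0[symmetric] mult_monom)
  with \<open>p \<noteq> 0\<close> show ?thesis using that by (metis monom_eq_0_iff)
qed

lemma bipoly_mult_eq_monomE: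
  fixes p q :: "'a::idom poly poly"
  assumes pq: "p * q = monom (monom r i) j" and "r \<noteq> 0"
  obtains c a b where "p = monom (monom c a) b" "c \<noteq> 0"
proof -
  obtain c b where p: "p = monom c b" "c \<noteq> 0"
    using poly_mult_eq_monomE[OF pq] assms(2) by auto
  obtain d b' where q: "q = monom d b'" "d \<noteq> 0"
    using poly_mult_eq_monomE[of q p] pq assms(2) by (metis monom_eq_0_iff mult.commute)
  have "c * d = monom r i" using pq p q by (simp add: mult_monom monom_eq_iff')
  then obtain c' a where "c = monom c' a" "c' \<noteq> 0" using assms(2) by (rule poly_mult_eq_monomE)
  then show ?thesis using that p by blast
qed

section \<open>Laurent polynomials in two variables\<close>

type_synonym laurent = "(int \<times> int) \<Rightarrow>\<^sub>0 real"

abbreviation lconst :: "real \<Rightarrow> laurent" where "lconst c \<equiv> Poly_Mapping.single (0, 0) c"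
abbreviation lmonom :: "int \<times> int \<Rightarrow> laurent" where "lmonom e \<equiv> Poly_Mapping.single e 1"

lemma lookup_single_mult:
  fixes f :: "'a::ab_group_add \<Rightarrow>\<^sub>0 'b::comm_ring_1"
  shows "Poly_Mapping.lookup (Poly_Mapping.single d r * f) k = r * Poly_Mapping.lookup f (k - d)"
proof -
  have "Poly_Mapping.lookup (Poly_Mapping.single d r * f) k
      = (\<Sum>l. (r when d = l) * (\<Sum>q. Poly_Mapping.lookup f q when k = l + q))"
    by (simp add: lookup_mult lookup_single)
  also have "\<dots> = (\<Sum>l. (r * (\<Sum>q. Poly_Mapping.lookup f q when k = d + q)) when d = l)"
    by (rule Sum_any.cong) (auto simp: when_def)
  also have "(\<Sum>q. Poly_Mapping.lookup f q when k = d + q) = (\<Sum>q. Poly_Mapping.lookup f q when q = k - d)"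
    by (rule Sum_any.cong) (auto simp: when_def algebra_simps)
  finally show ?thesis by simp
qed

lemma in_keys_single_mult:
  fixes g :: "'a::ab_group_add \<Rightarrow>\<^sub>0 'b::{comm_ring_1,ring_no_zero_divisors}"
  shows "k \<in> Poly_Mapping.keys (Poly_Mapping.single e c * g) \<longleftrightarrow> c \<noteq> 0 \<and> k - e \<in> Poly_Mapping.keys g"
  by (simp add: in_keys_iff lookup_single_mult)

lemma one_laurent: "(1::laurent) = lconst 1"
  by (simp add: zero_prod_def[symmetric])

lemma lmonom_mult: "lmonom a * lmonom b = lmonom (a + b)"
  by (simp add: mult_single)

lemma lmonom_zero: "lmonom (0, 0) = 1"
  by (simp add: one_laurent)

lemma lmonom_uminus_mult: "lmonom (- a) * (lmonom a * f) = f"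
  by (simp add: mult.assoc[symmetric] mult_single zero_prod_def[symmetric])

lemma lmonom_power: "lmonom (a, b) ^ n = lmonom (int n * a, int n * b)"
  by (induction n) (auto simp: lmonom_zero mult_single algebra_simps)

lemma single_eq_0_iff [simp]: "Poly_Mapping.single e c = 0 \<longleftrightarrow> c = 0"
  by (metis lookup_single_eq lookup_zero single_zero)

lemma single_eq_single_iff: "c \<noteq> 0 \<Longrightarrow> Poly_Mapping.single e c = Poly_Mapping.single e' c' \<longleftrightarrow> e = e' \<and> c = c'"
  by (metis lookup_single_eq lookup_single_not_eq)

section \<open>Polynomials in two variables as Laurent polynomials\<close>

locale comm_ring_hom =
  fixes hom :: "'a::comm_ring_1 \<Rightarrow> 'b::comm_ring_1"
  assumes hom_add: "hom (a + b) = hom a + hom b"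
    and hom_mult: "hom (a * b) = hom a * hom b"
    and hom_one: "hom 1 = 1"
begin

lemma hom_zero: "hom 0 = 0"
  using hom_add[of 0 0] by simp

lemma hom_diff: "hom (a - b) = hom a - hom b"
  using hom_add[of "a - b" b] by (simp add: algebra_simps)

lemma hom_power: "hom (a ^ n) = hom a ^ n"
  by (induction n) (simp_all add: hom_mult hom_one)

lemma hom_sum: "hom (sum f A) = (\<Sum>x\<in>A. hom (f x))"
  by (induction A rule: infinite_finite_induct) (simp_all add: hom_zero hom_add)

lemma map_poly_hom_add: "map_poly hom (p + q) = map_poly hom p + map_poly hom q"
  by (rule poly_eqI) (simp add: coeff_map_poly hom_zero hom_add)

lemma map_poly_hom_mult: "map_poly hom (p * q) = map_poly hom p * map_poly hom q"
  by (rule poly_eqI) (simp add: coeff_map_poly hom_zero coeff_mult hom_sum hom_mult)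

lemma comm_ring_hom_poly_map_poly: "comm_ring_hom (\<lambda>p. poly (map_poly hom p) x)"
  by standard (simp_all add: map_poly_hom_add map_poly_hom_mult hom_one)

end

interpretation lconst: comm_ring_hom lconst
  by standard (simp_all add: single_add mult_single one_laurent)

text \<open>A polynomial in \<open>real poly poly\<close> has the outer variable \<open>y\<close> and the inner variable \<open>x\<close>.\<close>

definition lpoly :: "real poly poly \<Rightarrow> laurent" where
  "lpoly p = poly (map_poly (\<lambda>c. poly (map_poly lconst c) (lmonom (1, 0))) p) (lmonom (0, 1))"

interpretation lpoly: comm_ring_hom lpoly
  unfolding lpoly_def
  by (intro comm_ring_hom.comm_ring_hom_poly_map_poly lconst.comm_ring_hom_poly_map_poly)

lemma lookup_lpoly:
  "Poly_Mapping.lookup (lpoly p) (a, b) =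
     (if a \<ge> 0 \<and> b \<ge> 0 then coeff (coeff p (nat b)) (nat a) else 0)"
proof -
  have lookup_inner: "Poly_Mapping.lookup (poly (map_poly lconst c) (lmonom (1, 0))) (a, b) =
      (if b = 0 \<and> a \<ge> 0 then coeff c (nat a) else 0)" for c :: "real poly" and a b
  proof (induction c arbitrary: a)
    case (pCons r c)
    then show ?case
      using pCons(2)[of "a - 1"]
      by (auto simp: map_poly_pCons lookup_add lookup_single_mult lookup_single when_def
          coeff_pCons nat_diff_distrib' split: nat.split)
  qed simp
  show ?thesis
  proof (induction p arbitrary: b)
    case (pCons c p)
    then show ?case
      using pCons(2)[of "b - 1"]
      by (auto simp: lpoly_def map_poly_pCons lookup_add lookup_single_mult lookup_inner
          coeff_pCons nat_diff_distrib' split: nat.split)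
  qed (simp add: lpoly_def)
qed

lemma lpoly_eq_0_iff [simp]: "lpoly p = 0 \<longleftrightarrow> p = 0"
proof
  assume "lpoly p = 0"
  then have "coeff (coeff p j) i = 0" for i j
    using lookup_lpoly[of p "int i" "int j"] by simp
  then show "p = 0" by (intro poly_eqI) (simp add: poly_eq_iff)
qed (simp add: lpoly.hom_zero)

lemma inj_lpoly: "inj lpoly"
  by (rule injI) (metis lpoly.hom_diff lpoly_eq_0_iff right_minus_eq)

lemma keys_lpoly_nonneg: "(a, b) \<in> Poly_Mapping.keys (lpoly p) \<Longrightarrow> a \<ge> 0 \<and> b \<ge> 0"
  by (auto simp: in_keys_iff lookup_lpoly split: if_splits)

lemma lpoly_monom: "lpoly (monom (monom c i) j) = Poly_Mapping.single (int i, int j) c"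
  by (rule poly_mapping_eqI) (auto simp: lookup_lpoly lookup_single when_def coeff_monom split: if_splits)

lemma lpoly_const: "lpoly [:[:c:]:] = lconst c"
  using lpoly_monom[of c 0 0] by (simp add: monom_0)

definition polyX :: "real poly poly" where "polyX = [:[:0, 1:]:]"
definition polyY :: "real poly poly" where "polyY = [:0, 1:]"

lemma lpoly_polyX_polyY_power: "lpoly (polyX ^ i * polyY ^ j) = lmonom (int i, int j)"
proof -
  have X: "polyX = monom (monom 1 1) 0" and Y: "polyY = monom (monom 1 0) 1"
    by (simp_all add: polyX_def polyY_def monom_altdef)
  have "lpoly polyX = lmonom (1, 0)" "lpoly polyY = lmonom (0, 1)"
    unfolding X Y lpoly_monom by simp_all
  then show ?thesis
    by (simp add: lpoly.hom_mult lpoly.hom_power lmonom_power mult_single)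
qed

lemma prime_elem_polyX: "prime_elem polyX"
  by (simp add: polyX_def prime_elem_const_poly_iff prime_elem_linear_field_poly)

lemma prime_elem_polyY: "prime_elem polyY"
  unfolding polyY_def by (rule prime_elem_linear_poly) auto

lemma polyY_dvd_iff: "polyY dvd p \<longleftrightarrow> coeff p 0 = 0"
  using dvd_iff_poly_eq_0[of 0 p] by (simp add: polyY_def poly_0_coeff_0)

lemma laurent_decomp: obtains s p where "f = lmonom s * lpoly p"
proof -
  let ?rep = "\<lambda>f. \<exists>N::nat. \<exists>p. f = lmonom (- int N, - int N) * lpoly p"
  have shift: "lmonom (- int N, - int N) * lpoly p =
      lmonom (- int (N + K), - int (N + K)) * lpoly (polyX ^ K * polyY ^ K * p)" for N K p
    by (simp only: lpoly.hom_mult[of "polyX ^ K * polyY ^ K" p] lpoly_polyX_polyY_power)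
      (simp add: mult.assoc[symmetric] lmonom_mult)
  have rep_add: "?rep (f + g)" if reps: "?rep f" "?rep g" for f g
  proof -
    obtain N p K q where "f = lmonom (- int N, - int N) * lpoly p" "g = lmonom (- int K, - int K) * lpoly q"
      using reps by blast
    then have "f = lmonom (- int (N + K), - int (N + K)) * lpoly (polyX ^ K * polyY ^ K * p)"
      "g = lmonom (- int (N + K), - int (N + K)) * lpoly (polyX ^ N * polyY ^ N * q)"
      using shift[of N p K] shift[of K q N] by (simp_all add: add.commute)
    then show ?thesis by (metis distrib_left lpoly.hom_add)
  qed
  have rep_single: "?rep (Poly_Mapping.single (a, b) c)" for a b c
  proof -
    define N where "N = nat (max \<bar>a\<bar> \<bar>b\<bar>)"
    have "a + int N \<ge> 0" "b + int N \<ge> 0" unfolding N_def by auto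
    then have "Poly_Mapping.single (a, b) c =
        lmonom (- int N, - int N) * lpoly (monom (monom c (nat (a + int N))) (nat (b + int N)))"
      by (simp add: lpoly_monom mult_single)
    then show ?thesis by blast
  qed
  have "f = (\<Sum>k\<in>Poly_Mapping.keys f. Poly_Mapping.single k (Poly_Mapping.lookup f k))"
    by (rule poly_mapping_eqI) (simp add: lookup_sum lookup_single when_def in_keys_iff)
  moreover have "?rep (\<Sum>k\<in>A. Poly_Mapping.single k (Poly_Mapping.lookup f k))" if "finite A" for A
    using that
  proof (induction A rule: finite_induct)
    case empty
    have "(0::laurent) = lmonom (- int 0, - int 0) * lpoly 0" by (simp add: lpoly.hom_zero)
    then show ?case by (simp only: sum.empty) blast
  next
    case (insert k A)
    then show ?case using rep_add rep_single[of "fst k" "snd k"] by simp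
  qed
  ultimately show ?thesis using that by (metis finite_keys)
qed

lemma laurent_no_zero_divisors: "(f::laurent) * g = 0 \<Longrightarrow> f = 0 \<or> g = 0"
proof -
  assume fg: "f * g = 0"
  obtain s p t q where f: "f = lmonom s * lpoly p" and g: "g = lmonom t * lpoly q"
    by (metis laurent_decomp)
  have "f * g = lmonom (s + t) * lpoly (p * q)"
    by (simp add: f g lpoly.hom_mult lmonom_mult[symmetric] ac_simps)
  then have "lpoly (p * q) = 0" using fg lmonom_uminus_mult[of "s + t" "lpoly (p * q)"] by simp
  then show ?thesis using f g by (auto simp: lpoly.hom_zero)
qed

lemma laurent_normal_form:
  assumes "f \<noteq> 0"
  obtains s p where "f = lmonom s * lpoly p" "p \<noteq> 0" "\<not> polyX dvd p" "\<not> polyY dvd p"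
proof -
  obtain s p where f: "f = lmonom s * lpoly p" by (rule laurent_decomp)
  have "p \<noteq> 0" using assms f by (auto simp: lpoly.hom_zero)
  moreover have "\<not> is_unit polyX" "\<not> is_unit polyY"
    using prime_elem_polyX prime_elem_polyY by (auto simp: prime_elem_def)
  ultimately obtain p1 where p1: "p = polyX ^ multiplicity polyX p * p1" "\<not> polyX dvd p1" "p1 \<noteq> 0"
    by (metis multiplicity_decompose' mult_zero_right)
  then obtain p2 where p2: "p1 = polyY ^ multiplicity polyY p1 * p2" "\<not> polyY dvd p2" "p2 \<noteq> 0"
    using \<open>\<not> is_unit polyY\<close> by (metis multiplicity_decompose' mult_zero_right)
  let ?e = "(int (multiplicity polyX p), int (multiplicity polyY p1))"
  have "lpoly p = lpoly (polyX ^ multiplicity polyX p * polyY ^ multiplicity polyY p1) * lpoly p2"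
    using p1(1) p2(1) by (simp add: lpoly.hom_mult[symmetric] mult.assoc)
  then have "f = lmonom (s + ?e) * lpoly p2"
    by (simp add: f lpoly_polyX_polyY_power mult.assoc[symmetric] lmonom_mult)
  moreover have "\<not> polyX dvd p2" using p1(2) p2(1) by (metis dvd_mult2 mult.commute)
  ultimately show ?thesis using that p2 by blast
qed

lemma laurent_mult_eq_singleE:
  assumes fg: "(f::laurent) * g = Poly_Mapping.single e c" and "c \<noteq> 0"
  obtains e' c' where "f = Poly_Mapping.single e' c'" "c' \<noteq> 0"
proof -
  obtain s p t q where f: "f = lmonom s * lpoly p" and g: "g = lmonom t * lpoly q"
    by (metis laurent_decomp)
  obtain k1 k2 where k: "e - s - t = (k1, k2)" by (cases "e - s - t")
  have "f * g = lmonom (s + t) * lpoly (p * q)"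
    by (simp add: f g lpoly.hom_mult lmonom_mult[symmetric] ac_simps)
  then have "lpoly (p * q) = lmonom (- (s + t)) * Poly_Mapping.single e c"
    using fg lmonom_uminus_mult[of "s + t" "lpoly (p * q)"] by simp
  also have "\<dots> = Poly_Mapping.single (k1, k2) c" using k by (simp add: mult_single algebra_simps)
  finally have pq: "lpoly (p * q) = Poly_Mapping.single (k1, k2) c" .
  then have "k1 \<ge> 0" "k2 \<ge> 0" using keys_lpoly_nonneg[of k1 k2 "p * q"] assms(2) by auto
  then have "lpoly (p * q) = lpoly (monom (monom c (nat k1)) (nat k2))" by (simp add: pq lpoly_monom)
  then have "p * q = monom (monom c (nat k1)) (nat k2)" using inj_lpoly by (simp add: inj_eq)
  then obtain c' a b where "p = monom (monom c' a) b" "c' \<noteq> 0"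
    using assms(2) by (rule bipoly_mult_eq_monomE)
  then show ?thesis using that f by (simp add: lpoly_monom mult_single)
qed

lemma polyX_polyY_power_eq_monom: "polyX ^ a * polyY ^ b = monom (monom 1 a) b"
  by (rule injD[OF inj_lpoly]) (simp add: lpoly_polyX_polyY_power lpoly_monom)

lemma dvd_polyX_polyY_mult_cancel:
  assumes "\<not> polyX dvd u" "\<not> polyY dvd u" "u dvd polyX ^ a * polyY ^ b * p"
  shows "u dvd p"
proof -
  have "coprime u polyX" "coprime u polyY"
    using prime_elem_imp_coprime prime_elem_polyX prime_elem_polyY assms(1,2) coprime_commute by blast+
  then show ?thesis using assms(3) by (simp add: coprime_dvd_mult_right_iff mult.assoc)
qed

lemma lpoly_eq_lmonom_mult_lpolyE:
  assumes "lpoly p = lmonom (e1, e2) * lpoly q"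
  obtains a1 b1 a2 b2 where "polyX ^ a1 * polyY ^ b1 * p = polyX ^ a2 * polyY ^ b2 * q"
proof -
  define a1 b1 a2 b2 where "a1 = nat (- e1)" "b1 = nat (- e2)" "a2 = nat e1" "b2 = nat e2"
  have "lmonom (int a1, int b1) * lmonom (e1, e2) = lmonom (int a2, int b2)"
    unfolding a1_b1_a2_b2_def by (simp add: mult_single)
  then have "lpoly (polyX ^ a1 * polyY ^ b1 * p) = lpoly (polyX ^ a2 * polyY ^ b2 * q)"
    by (simp add: lpoly.hom_mult[of "polyX ^ _ * polyY ^ _"] lpoly_polyX_polyY_power assms mult.assoc[symmetric])
  then show ?thesis using that inj_lpoly by (simp add: inj_eq)
qed

lemma lpoly_dvd_of_laurent_dvd:
  assumes "lmonom s * lpoly p = lmonom t * lpoly u * w" "\<not> polyX dvd u" "\<not> polyY dvd u"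
  shows "u dvd p"
proof -
  obtain t' v where w: "w = lmonom t' * lpoly v" by (rule laurent_decomp)
  obtain e1 e2 where e: "t + t' - s = (e1, e2)" by (cases "t + t' - s")
  have "lmonom s * lpoly p = (lmonom t * lmonom t') * lpoly (u * v)"
    unfolding assms(1) w lpoly.hom_mult by (simp only: mult_ac)
  also have "\<dots> = lmonom s * (lmonom (t + t' - s) * lpoly (u * v))"
    by (simp add: mult.assoc[symmetric] mult_single algebra_simps)
  finally have "lpoly p = lmonom (t + t' - s) * lpoly (u * v)" by (metis lmonom_uminus_mult)
  then obtain a1 b1 a2 b2 where "polyX ^ a1 * polyY ^ b1 * p = polyX ^ a2 * polyY ^ b2 * (u * v)"
    using e lpoly_eq_lmonom_mult_lpolyE by metis
  then have "u dvd polyX ^ a1 * polyY ^ b1 * p" by (metis dvd_triv_left dvd_mult2 mult.commute)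
  then show ?thesis using assms(2,3) dvd_polyX_polyY_mult_cancel by blast
qed

section \<open>The monoid algebra \<open>\<real>[x, y; M]\<close>\<close>

lemma M_add: "a \<in> M \<Longrightarrow> b \<in> M \<Longrightarrow> a + b \<in> M"
  by (cases a; cases b) (auto simp: M_def)

lemma Ralg_mult: "f \<in> Ralg \<Longrightarrow> g \<in> Ralg \<Longrightarrow> f * g \<in> Ralg"
  unfolding Ralg_def using keys_mult[of f g] M_add by blast

lemma single_in_Ralg_iff: "Poly_Mapping.single e c \<in> Ralg \<longleftrightarrow> c = 0 \<or> e \<in> M"
  by (auto simp: Ralg_def)

lemma lpoly_in_Ralg: "lpoly p \<in> Ralg"
  unfolding Ralg_def M_def using keys_lpoly_nonneg by fastforce

lemma integral_domain_Ralg: "integral_domain_in Ralg"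
  unfolding integral_domain_in_def
proof (intro conjI ballI impI)
  show "(0::laurent) \<noteq> 1" by (metis lookup_single_eq lookup_zero one_laurent zero_neq_one)
  show "1 \<in> Ralg" by (simp add: one_laurent single_in_Ralg_iff M_def)
  show "a + b \<in> Ralg" if "a \<in> Ralg" "b \<in> Ralg" for a b
    using that keys_add[of a b] by (auto simp: Ralg_def)
qed (auto simp: Ralg_mult laurent_no_zero_divisors, simp_all add: Ralg_def)

lemma unit_in_Ralg_iff: "unit_in Ralg u \<longleftrightarrow> (\<exists>c. c \<noteq> 0 \<and> u = lconst c)"
proof
  assume "unit_in Ralg u"
  then obtain v where uv: "u \<in> Ralg" "v \<in> Ralg" "u * v = lconst 1"
    unfolding unit_in_def one_laurent by blast
  obtain e c where u: "u = Poly_Mapping.single e c" "c \<noteq> 0"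
    using laurent_mult_eq_singleE[OF uv(3)] by auto
  obtain e' c' where v: "v = Poly_Mapping.single e' c'" "c' \<noteq> 0"
    using laurent_mult_eq_singleE[of v u] uv(3) by (metis mult.commute zero_neq_one)
  have "e + e' = (0, 0)" using uv(3) u v by (simp add: mult_single single_eq_single_iff)
  moreover have "e \<in> M" "e' \<in> M" using uv u v single_in_Ralg_iff by auto
  ultimately have "e = (0, 0)" by (cases e; cases e') (auto simp: M_def)
  then show "\<exists>c. c \<noteq> 0 \<and> u = lconst c" using u by blast
next
  assume "\<exists>c. c \<noteq> 0 \<and> u = lconst c"
  then obtain c where "c \<noteq> 0" "u = lconst c" by blast
  then have "u * lconst (1 / c) = 1" "u \<in> Ralg" "lconst (1 / c) \<in> Ralg"
    by (auto simp: mult_single one_laurent single_in_Ralg_iff M_def)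
  then show "unit_in Ralg u" unfolding unit_in_def by blast
qed

lemma unit_in_Ralg_single_iff: "unit_in Ralg (Poly_Mapping.single e c) \<longleftrightarrow> c \<noteq> 0 \<and> e = (0, 0)"
  unfolding unit_in_Ralg_iff by (metis single_eq_single_iff single_zero)

lemma irreducible_lmonom:
  assumes "e = (1, 0) \<or> e = (0, 1)"
  shows "irreducible_in Ralg (lmonom e)"
  unfolding irreducible_in_def
proof (intro conjI ballI impI)
  show "lmonom e \<in> Ralg" "lmonom e \<noteq> 0" "\<not> unit_in Ralg (lmonom e)"
    using assms by (auto simp: single_in_Ralg_iff M_def unit_in_Ralg_single_iff)
  fix u v assume uv: "u \<in> Ralg" "v \<in> Ralg" "lmonom e = u * v"
  obtain e1 c1 where u: "u = Poly_Mapping.single e1 c1" "c1 \<noteq> 0"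
    using laurent_mult_eq_singleE[of u v e 1] uv(3) by auto
  obtain e2 c2 where v: "v = Poly_Mapping.single e2 c2" "c2 \<noteq> 0"
    using laurent_mult_eq_singleE[of v u e 1] uv(3) by (auto simp: mult.commute)
  have "e1 + e2 = e" using uv(3) u v by (simp add: mult_single single_eq_single_iff)
  moreover have "e1 \<in> M" "e2 \<in> M" using uv u v single_in_Ralg_iff by auto
  ultimately have "e1 = (0, 0) \<or> e2 = (0, 0)"
    using assms by (cases e1; cases e2) (auto simp: M_def)
  then show "unit_in Ralg u \<or> unit_in Ralg v" using u v by (auto simp: unit_in_Ralg_single_iff)
qed

lemma irreducible_single_fst_nonneg:
  assumes "irreducible_in Ralg (Poly_Mapping.single (a, b) c)"
  shows "a \<ge> 0"
proof (rule ccontr)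
  assume "\<not> a \<ge> 0"
  moreover have "c \<noteq> 0" "(a, b) \<in> M" using assms by (auto simp: irreducible_in_def single_in_Ralg_iff)
  ultimately have "b \<ge> 2" by (auto simp: M_def)
  have "Poly_Mapping.single (a, b) c = lmonom (1, 0) * Poly_Mapping.single (a - 1, b) c"
    by (simp add: mult_single)
  moreover have "lmonom (1, 0) \<in> Ralg" "Poly_Mapping.single (a - 1, b) c \<in> Ralg"
    using \<open>b \<ge> 2\<close> by (auto simp: single_in_Ralg_iff M_def)
  moreover have "\<not> unit_in Ralg (lmonom (1, 0))" "\<not> unit_in Ralg (Poly_Mapping.single (a - 1, b) c)"
    using \<open>b \<ge> 2\<close> by (auto simp: unit_in_Ralg_single_iff)
  ultimately show False using assms unfolding irreducible_in_def by blast
qed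

lemma prod_irreducibles_single_fst_nonneg:
  assumes "\<forall>x\<in>set xs. irreducible_in Ralg x" "prod_list xs = Poly_Mapping.single e c" "c \<noteq> 0"
  shows "fst e \<ge> 0"
  using assms
proof (induction xs arbitrary: e c)
  case Nil
  then show ?case by (auto simp: one_laurent single_eq_single_iff)
next
  case (Cons x xs)
  have eq: "x * prod_list xs = Poly_Mapping.single e c" using Cons.prems by simp
  obtain e1 c1 where x: "x = Poly_Mapping.single e1 c1" "c1 \<noteq> 0"
    using laurent_mult_eq_singleE[OF eq Cons.prems(3)] by auto
  obtain e2 c2 where xs: "prod_list xs = Poly_Mapping.single e2 c2" "c2 \<noteq> 0"
    using laurent_mult_eq_singleE[of "prod_list xs" x] eq Cons.prems(3) by (metis mult.commute)
  have "e = e1 + e2" using eq x xs by (simp add: mult_single single_eq_single_iff)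
  moreover have "fst e1 \<ge> 0"
    using irreducible_single_fst_nonneg[of "fst e1" "snd e1" c1] Cons.prems(1) x by simp
  moreover have "fst e2 \<ge> 0" using Cons.IH Cons.prems(1) xs by simp
  ultimately show ?case by simp
qed

lemma not_atomic_Ralg: "\<not> atomic_dom Ralg"
proof
  let ?f = "lmonom (-1, 2)"
  assume "atomic_dom Ralg"
  moreover have "?f \<in> Ralg" "?f \<noteq> 0" by (auto simp: single_in_Ralg_iff M_def)
  ultimately have "atomic_elem Ralg ?f" unfolding atomic_dom_def by blast
  moreover have "\<not> unit_in Ralg ?f" by (simp add: unit_in_Ralg_single_iff)
  ultimately obtain xs where "factorization_in Ralg ?f xs" unfolding atomic_elem_def by blast
  then show False
    using prod_irreducibles_single_fst_nonneg[of xs "(-1, 2)" 1] by (auto simp: factorization_in_def)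
qed

section \<open>Finitely many irreducible divisors\<close>

lemma irreducible_eq_x_if_shiftable:
  assumes irr: "irreducible_in Ralg q" and shiftable: "\<forall>(i, j) \<in> Poly_Mapping.keys q. (i - 1, j) \<in> M"
  obtains c where "q = Poly_Mapping.single (1, 0) c"
proof -
  have "lmonom (-1, 0) * q \<in> Ralg"
    using shiftable by (fastforce simp: Ralg_def in_keys_single_mult)
  moreover have q_eq: "q = lmonom (1, 0) * (lmonom (-1, 0) * q)"
    using lmonom_uminus_mult[of "(-1, 0)"] by (simp add: mult.assoc[symmetric] mult_single)
  moreover have "lmonom (1, 0) \<in> Ralg" "\<not> unit_in Ralg (lmonom (1, 0))"
    by (simp_all add: single_in_Ralg_iff M_def unit_in_Ralg_single_iff)
  ultimately have "unit_in Ralg (lmonom (-1, 0) * q)"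
    using irr unfolding irreducible_in_def by blast
  then obtain c where "lmonom (-1, 0) * q = lconst c" by (auto simp: unit_in_Ralg_iff)
  then have "q = Poly_Mapping.single (1, 0) c"
    using q_eq by (simp add: mult_single)
  then show ?thesis using that by blast
qed

lemma irreducible_exponent_bounds:
  assumes irr: "irreducible_in Ralg (lmonom (a, b) * lpoly u)" and u0: "coeff u 0 \<noteq> 0"
  shows "- int (degree (coeff u 0)) \<le> a \<and> a \<le> 1 \<and> 0 \<le> b \<and> b \<le> 1"
proof -
  let ?q = "lmonom (a, b) * lpoly u" and ?m = "int (degree (coeff u 0))"
  have key: "(a + ?m, b) \<in> Poly_Mapping.keys ?q"
    using u0 by (simp add: in_keys_iff lookup_single_mult lookup_lpoly)
  have keys_ge: "a \<le> i \<and> b \<le> j" if "(i, j) \<in> Poly_Mapping.keys ?q" for i j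
    using that keys_lpoly_nonneg[of "i - a" "j - b" u] by (simp add: in_keys_single_mult)
  have not_x: "a + ?m = 1 \<and> b = 0" if shiftable: "\<forall>(i, j) \<in> Poly_Mapping.keys ?q. (i - 1, j) \<in> M"
  proof -
    obtain c where "?q = Poly_Mapping.single (1, 0) c"
      using irr shiftable by (rule irreducible_eq_x_if_shiftable)
    with key show ?thesis by (auto split: if_splits)
  qed
  have "b \<le> 1"
  proof (rule ccontr)
    assume "\<not> b \<le> 1"
    then have "\<forall>(i, j) \<in> Poly_Mapping.keys ?q. (i - 1, j) \<in> M"
      using keys_ge by (fastforce simp: M_def)
    with not_x \<open>\<not> b \<le> 1\<close> show False by simp
  qed
  moreover have "(a + ?m, b) \<in> M" using key irr by (auto simp: irreducible_in_def Ralg_def)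
  ultimately have "0 \<le> b" "- ?m \<le> a" by (auto simp: M_def)
  moreover have "a \<le> 1"
  proof (rule ccontr)
    assume "\<not> a \<le> 1"
    then have "\<forall>(i, j) \<in> Poly_Mapping.keys ?q. (i - 1, j) \<in> M"
      using keys_ge \<open>0 \<le> b\<close> by (fastforce simp: M_def)
    with not_x \<open>\<not> a \<le> 1\<close> show False by simp
  qed
  ultimately show ?thesis using \<open>b \<le> 1\<close> by simp
qed

lemma irreducible_divisor_assocE:
  assumes q: "irreducible_in Ralg q" "dvd_in Ralg q (lmonom s * lpoly p)"
  obtains d a b where "d dvd p" "normalize d = d" "- int (degree (coeff d 0)) \<le> a" "a \<le> 1"
    "0 \<le> b" "b \<le> 1" "assoc_in Ralg q (lmonom (a, b) * lpoly d)"
proof -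
  obtain w where w: "lmonom s * lpoly p = q * w" using q(2) by (auto simp: dvd_in_def)
  have "q \<noteq> 0" using q(1) by (simp add: irreducible_in_def)
  then obtain t u where qu: "q = lmonom t * lpoly u" "u \<noteq> 0" "\<not> polyX dvd u" "\<not> polyY dvd u"
    by (rule laurent_normal_form)
  define d where "d = normalize u"
  have "d dvd p" using lpoly_dvd_of_laurent_dvd[of s p t u w] w qu by (simp add: d_def)
  obtain k where k: "k \<noteq> 0" "unit_factor u = [:[:k:]:]"
    using qu(2) unit_factor_is_unit[of u] by (auto simp: is_unit_poly_iff dvd_field_iff)
  define z where "z = lmonom t * lpoly d"
  have "lpoly u = lconst k * lpoly d"
    by (metis k(2) d_def lpoly.hom_mult lpoly_const unit_factor_mult_normalize)
  then have q_eq: "q = lconst k * z" by (simp add: qu(1) z_def mult_ac)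
  have units: "unit_in Ralg (lconst k)" "unit_in Ralg (lconst (1 / k))"
    using k(1) unfolding unit_in_Ralg_iff by (metis divide_eq_0_iff zero_neq_one)+
  have "irreducible_in Ralg z"
    using irreducible_in_unit_mult[OF Ralg_mult q(1) units(2)] k(1) q_eq
    by (simp add: mult.assoc[symmetric] mult_single one_laurent[symmetric])
  moreover have "coeff d 0 \<noteq> 0" using qu(4) polyY_dvd_iff[of d] by (simp add: d_def)
  moreover obtain a b where t: "t = (a, b)" by fastforce
  moreover have "assoc_in Ralg q z"
    using assoc_in_unit_mult[OF Ralg_mult _ units(1)] \<open>irreducible_in Ralg z\<close> q_eq
    by (simp add: irreducible_in_def)
  moreover have "normalize d = d" by (simp add: d_def)
  ultimately show ?thesis
    using that \<open>d dvd p\<close> irreducible_exponent_bounds[of a b d] by (auto simp: z_def)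
qed

lemma IDF_Ralg: "IDF_dom Ralg"
  unfolding IDF_dom_def
proof (intro conjI ballI impI integral_domain_Ralg)
  fix f assume "f \<in> Ralg" "f \<noteq> 0"
  then obtain s p where f: "f = lmonom s * lpoly p" "p \<noteq> 0" by (metis laurent_normal_form)
  let ?F = "(\<lambda>(d, a, b). lmonom (a, b) * lpoly d) `
    (SIGMA d:{d. d dvd p \<and> normalize d = d}. {- int (degree (coeff d 0))..1} \<times> {0..1})"
  have "finite ?F" using finite_normalized_divisors[OF f(2)] by auto
  moreover have "\<exists>z\<in>?F. assoc_in Ralg q z" if q: "irreducible_in Ralg q" "dvd_in Ralg q f" for q
  proof -
    obtain d a b where "d dvd p" "normalize d = d" "- int (degree (coeff d 0)) \<le> a" "a \<le> 1"
      "0 \<le> b" "b \<le> 1" "assoc_in Ralg q (lmonom (a, b) * lpoly d)"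
      using q f(1) by (metis irreducible_divisor_assocE)
    then show ?thesis
      by (intro bexI[of _ "lmonom (a, b) * lpoly d"] image_eqI[of _ _ "(d, a, b)"]) auto
  qed
  ultimately show "\<exists>F. finite F \<and> (\<forall>q. irreducible_in Ralg q \<and> dvd_in Ralg q f \<longrightarrow> (\<exists>z\<in>F. assoc_in Ralg q z))"
    by blast
qed

section \<open>Almost atomicity\<close>

lemma monomial_factor_unit_in_Ralg:
  assumes z: "z = u * Poly_Mapping.single e c" "u \<in> Ralg" "Poly_Mapping.single e c \<in> Ralg" "c \<noteq> 0"
    and key: "(j, 0) \<in> Poly_Mapping.keys z" and not_shiftable: "lmonom (-1, 0) * z \<notin> Ralg"
  shows "unit_in Ralg (Poly_Mapping.single e c)"
proof -
  obtain e1 e2 where e: "e = (e1, e2)" by fastforce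
  have "(e1, e2) \<in> M" using z(3,4) e by (simp add: single_in_Ralg_iff)
  have "Poly_Mapping.single (- e) (1 / c) * Poly_Mapping.single e c = 1"
    using z(4) by (simp add: mult_single one_laurent)
  then have "u = Poly_Mapping.single (- e) (1 / c) * z"
    by (simp add: z(1) mult.left_commute[of _ u])
  then have "(j, 0) - e \<in> Poly_Mapping.keys u" using key z(4) by (simp add: in_keys_single_mult)
  then have "(j - e1, - e2) \<in> M" using z(2) e by (auto simp: Ralg_def)
  with \<open>(e1, e2) \<in> M\<close> have "e2 = 0" "e1 \<ge> 0" by (auto simp: M_def)
  have "e1 = 0"
  proof (rule ccontr)
    assume "e1 \<noteq> 0"
    then have "Poly_Mapping.single (e1 - 1, 0) c \<in> Ralg"
      using \<open>e1 \<ge> 0\<close> by (simp add: single_in_Ralg_iff M_def)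
    moreover have "lmonom (-1, 0) * z = u * Poly_Mapping.single (e1 - 1, 0) c"
      using z(1) e \<open>e2 = 0\<close> by (simp add: mult.left_commute[of _ u] mult_single)
    ultimately show False using not_shiftable z(2) Ralg_mult by simp
  qed
  then show ?thesis using e \<open>e2 = 0\<close> z(4) by (simp add: unit_in_Ralg_single_iff)
qed

lemma not_unit_in_Ralg_lmonom_mult_lpoly:
  assumes "prime_elem r" "\<not> polyX dvd r"
  shows "\<not> unit_in Ralg (lmonom (- int K, 0) * lpoly r)"
proof
  assume "unit_in Ralg (lmonom (- int K, 0) * lpoly r)"
  then obtain c where "c \<noteq> 0" "lmonom (- int K, 0) * lpoly r = lconst c" by (auto simp: unit_in_Ralg_iff)
  then have "lpoly r = lpoly (monom (monom c K) 0)"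
    using lmonom_uminus_mult[of "(- int K, 0)" "lpoly r"] by (simp add: lpoly_monom mult_single)
  then have r: "r = [:monom c K:]" using inj_lpoly by (simp add: inj_eq monom_0)
  show False
  proof (cases K)
    case 0
    then show False using r \<open>c \<noteq> 0\<close> assms(1)
      by (simp add: prime_elem_def monom_0 is_unit_const_poly_iff dvd_field_iff)
  next
    case (Suc K')
    then have "r = polyX * [:monom c K':]" by (simp add: r polyX_def monom_Suc)
    then show False using assms(2) by (metis dvd_triv_left)
  qed
qed

lemma lpoly_cofactor_singleE:
  assumes "polyX ^ a1 * polyY ^ b1 * r = polyX ^ a2 * polyY ^ b2 * (q1 * q2)" "r dvd q1" "r \<noteq> 0"
  obtains e c where "lpoly q2 = Poly_Mapping.single e c" "c \<noteq> 0"
proof -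
  obtain g where "q1 = r * g" using assms(2) by blast
  with assms(1,3) have "q2 * (polyX ^ a2 * polyY ^ b2 * g) = monom (monom 1 a1) b1"
    by (simp add: polyX_polyY_power_eq_monom[symmetric] mult_ac)
  then obtain c a b where "q2 = monom (monom c a) b" "c \<noteq> 0" by (rule bipoly_mult_eq_monomE) simp
  then show ?thesis using that by (auto simp: lpoly_monom)
qed

text \<open>Maximality of \<open>K\<close> excludes monomial factors of positive \<open>x\<close>-degree, and primality of \<open>r\<close>
  in \<open>\<real>[x, y]\<close> forces one factor of any factorization to be a monomial.\<close>

lemma irreducible_lmonom_mult_lpoly_prime:
  assumes prime: "prime_elem r" and nX: "\<not> polyX dvd r" and nY: "\<not> polyY dvd r"
    and z: "z = lmonom (- int K, 0) * lpoly r" "z \<in> Ralg" and not_shiftable: "lmonom (-1, 0) * z \<notin> Ralg"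
  shows "irreducible_in Ralg z"
  unfolding irreducible_in_def
proof (intro conjI ballI impI)
  have r: "lpoly r = lmonom (int K, 0) * z"
    using lmonom_uminus_mult[of "(- int K, 0)" "lpoly r"] by (simp add: z(1))
  have "r \<noteq> 0" using prime by (simp add: prime_elem_def)
  then show "z \<noteq> 0" using r by auto
  show "z \<in> Ralg" by (rule z(2))
  show "\<not> unit_in Ralg z" using not_unit_in_Ralg_lmonom_mult_lpoly[OF prime nX] z(1) by simp
  have key: "(int (degree (coeff r 0)) - int K, 0) \<in> Poly_Mapping.keys z"
    using nY by (simp add: z(1) in_keys_iff lookup_single_mult lookup_lpoly polyY_dvd_iff)
  fix u v assume uv: "u \<in> Ralg" "v \<in> Ralg" "z = u * v"
  obtain su pu sv pv where u: "u = lmonom su * lpoly pu" and v: "v = lmonom sv * lpoly pv"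
    by (metis laurent_decomp)
  obtain e1 e2 where e: "(int K, 0) + su + sv = (e1, e2)" by (cases "(int K, 0) + su + sv")
  have "lpoly r = lmonom (e1, e2) * lpoly (pu * pv)"
    by (simp add: r uv(3) u v lpoly.hom_mult e[symmetric] mult_single mult_ac add_ac)
  then obtain a1 b1 a2 b2 where split: "polyX ^ a1 * polyY ^ b1 * r = polyX ^ a2 * polyY ^ b2 * (pu * pv)"
    by (rule lpoly_eq_lmonom_mult_lpolyE)
  then have "r dvd pu * pv" using nX nY dvd_polyX_polyY_mult_cancel by (metis dvd_triv_right)
  then consider "r dvd pu" | "r dvd pv" using prime by (auto simp: prime_elem_dvd_mult_iff)
  then show "unit_in Ralg u \<or> unit_in Ralg v"
  proof cases
    case 1
    then obtain e c where "v = Poly_Mapping.single (sv + e) c" "c \<noteq> 0"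
      using lpoly_cofactor_singleE[OF split _ \<open>r \<noteq> 0\<close>] v by (metis mult_single mult_1)
    then show ?thesis using monomial_factor_unit_in_Ralg uv key not_shiftable by metis
  next
    case 2
    then obtain e c where "u = Poly_Mapping.single (su + e) c" "c \<noteq> 0"
      using lpoly_cofactor_singleE[of a1 b1 r a2 b2 pv pu] split \<open>r \<noteq> 0\<close> u
      by (metis mult.commute mult_single mult_1)
    then show ?thesis using monomial_factor_unit_in_Ralg uv key not_shiftable by (metis mult.commute)
  qed
qed

lemma prime_lpoly_eq_x_power_mult_irreducibleE:
  assumes prime: "prime_elem r" and nX: "\<not> polyX dvd r" and nY: "\<not> polyY dvd r"
  obtains K z where "lpoly r = lmonom (int K, 0) * z" "irreducible_in Ralg z"
proof -
  define S where "S = {K::nat. lmonom (- int K, 0) * lpoly r \<in> Ralg}"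
  define i where "i = degree (coeff r 0)"
  have "K \<le> i" if "K \<in> S" for K
  proof -
    have "(int i - int K, 0) \<in> Poly_Mapping.keys (lmonom (- int K, 0) * lpoly r)"
      using nY by (simp add: i_def in_keys_iff lookup_single_mult lookup_lpoly polyY_dvd_iff)
    then show ?thesis using that by (auto simp: S_def Ralg_def M_def)
  qed
  moreover have "0 \<in> S" by (simp add: S_def lmonom_zero lpoly_in_Ralg)
  ultimately have "finite S" "S \<noteq> {}" by (auto intro: finite_subset[of S "{..i}"])
  define K where "K = Max S"
  have "K \<in> S" "Suc K \<notin> S" using \<open>finite S\<close> \<open>S \<noteq> {}\<close> by (auto simp: K_def dest: Max_ge)
  define z where "z = lmonom (- int K, 0) * lpoly r"
  have "lmonom (-1, 0) * z = lmonom (- int (Suc K), 0) * lpoly r"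
    by (simp add: z_def mult.assoc[symmetric] mult_single)
  then have "irreducible_in Ralg z"
    using irreducible_lmonom_mult_lpoly_prime[OF prime nX nY z_def] \<open>K \<in> S\<close> \<open>Suc K \<notin> S\<close>
    by (simp add: S_def z_def)
  moreover have "lpoly r = lmonom (int K, 0) * z"
    using lmonom_uminus_mult[of "(- int K, 0)" "lpoly r"] by (simp add: z_def)
  ultimately show ?thesis using that by blast
qed

lemma lpoly_prod_primes_eq_x_power_mult_irreducibles:
  assumes "\<forall>r\<in>set rs. prime_elem r \<and> \<not> polyX dvd r \<and> \<not> polyY dvd r"
  shows "\<exists>K zs. lpoly (prod_list rs) = lmonom (int K, 0) * prod_list zs \<and> (\<forall>z\<in>set zs. irreducible_in Ralg z)"
  using assms
proof (induction rs)
  case Nil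
  then show ?case by (intro exI[of _ 0] exI[of _ "[]"]) (simp add: lpoly.hom_one lmonom_zero)
next
  case (Cons r rs)
  obtain K zs where rs: "lpoly (prod_list rs) = lmonom (int K, 0) * prod_list zs"
    "\<forall>z\<in>set zs. irreducible_in Ralg z"
    using Cons by auto
  obtain K' z where r: "lpoly r = lmonom (int K', 0) * z" "irreducible_in Ralg z"
    using Cons.prems prime_lpoly_eq_x_power_mult_irreducibleE by auto
  have "lpoly (prod_list (r # rs)) = lmonom (int (K' + K), 0) * prod_list (z # zs)"
    by (simp add: lpoly.hom_mult r rs mult_single mult_ac)
  then show ?case using r rs by (metis set_ConsD)
qed

lemma atomic_elem_Ralg_monomial_mult:
  assumes "\<forall>z\<in>set zs. irreducible_in Ralg z" "c \<noteq> 0"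
  shows "atomic_elem Ralg (lconst c * (lmonom (int m, int n) * prod_list zs))"
proof -
  let ?xs = "replicate m (lmonom (1, 0)) @ replicate n (lmonom (0, 1)) @ zs"
  have "\<forall>x\<in>set ?xs. irreducible_in Ralg x" using assms(1) irreducible_lmonom by auto
  moreover have "unit_in Ralg (lconst c)" using assms(2) unit_in_Ralg_single_iff by blast
  ultimately have "atomic_elem Ralg (lconst c * prod_list ?xs)"
    using atomic_elem_unit_mult_prod[OF Ralg_mult] by blast
  moreover have "prod_list ?xs = lmonom (int m, int n) * prod_list zs"
    by (simp add: lmonom_power mult_single mult.assoc[symmetric])
  ultimately show ?thesis by simp
qed

lemma Ralg_factor_const_lmonom_irreducibles:
  assumes "b \<in> Ralg" "b \<noteq> 0"
  obtains k a c zs where "k \<noteq> 0" "c \<ge> 0" "b = lconst k * (lmonom (a, c) * prod_list zs)"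
    "\<forall>z\<in>set zs. irreducible_in Ralg z"
proof -
  obtain s p where b: "b = lmonom s * lpoly p" "p \<noteq> 0" "\<not> polyX dvd p" "\<not> polyY dvd p"
    using assms(2) by (rule laurent_normal_form)
  obtain rs where rs: "mset rs = prime_factorization p" using ex_mset by blast
  have "normalize p = normalize (prod_list rs)"
    using prod_mset_prime_factorization_weak[OF b(2)] by (simp add: rs[symmetric] prod_mset_prod_list)
  then obtain w where "is_unit w" "p = w * prod_list rs" by (rule associatedE1)
  then obtain k where k: "k \<noteq> 0" "p = [:[:k:]:] * prod_list rs"
    by (auto simp: is_unit_poly_iff dvd_field_iff)
  have "\<forall>r\<in>set rs. prime_elem r \<and> \<not> polyX dvd r \<and> \<not> polyY dvd r"
    using b(3,4) rs by (metis dvd_trans in_prime_factors_imp_dvd in_prime_factors_imp_prime prime_def set_mset_mset)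
  then obtain K zs where zs: "lpoly (prod_list rs) = lmonom (int K, 0) * prod_list zs"
    "\<forall>z\<in>set zs. irreducible_in Ralg z"
    using lpoly_prod_primes_eq_x_power_mult_irreducibles by blast
  obtain s1 s2 where s: "s = (s1, s2)" by fastforce
  have "lpoly p = lconst k * lpoly (prod_list rs)" by (simp only: k(2) lpoly.hom_mult lpoly_const)
  then have "b = lconst k * (lmonom (s1 + int K, s2) * prod_list zs)"
    by (simp add: b(1) s zs(1) mult_single mult_ac)
  moreover have "(s1 + int (degree (coeff p 0)), s2) \<in> Poly_Mapping.keys b"
    using b(4) by (simp add: b(1) s in_keys_iff lookup_single_mult lookup_lpoly polyY_dvd_iff)
  then have "s2 \<ge> 0" using assms(1) by (auto simp: Ralg_def M_def)
  ultimately show ?thesis using that k(1) zs(2) by blast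
qed

lemma almost_atomic_Ralg: "almost_atomic_dom Ralg"
  unfolding almost_atomic_dom_def
proof (intro ballI impI)
  fix b assume "b \<in> Ralg" "b \<noteq> 0"
  then obtain k a c zs where b: "k \<noteq> 0" "c \<ge> 0" "b = lconst k * (lmonom (a, c) * prod_list zs)"
    "\<forall>z\<in>set zs. irreducible_in Ralg z"
    by (rule Ralg_factor_const_lmonom_irreducibles)
  define N where "N = nat (- a)"
  let ?u = "lconst 1 * (lmonom (int N, int 0) * prod_list [])"
  have "?u \<in> Ralg" by (simp add: mult_single single_in_Ralg_iff M_def)
  moreover have "atomic_elem Ralg ?u" by (rule atomic_elem_Ralg_monomial_mult) simp_all
  moreover have "int N + a = int (nat a)" "c = int (nat c)" using \<open>c \<ge> 0\<close> by (auto simp: N_def)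
  then have "?u * b = lconst k * (lmonom (int (nat a), int (nat c)) * prod_list zs)"
    by (simp add: b(3) mult.left_commute[of _ "lconst k"] mult.assoc[symmetric] mult_single)
  then have "atomic_elem Ralg (?u * b)" using atomic_elem_Ralg_monomial_mult[OF b(4,1)] by metis
  ultimately show "\<exists>u\<in>Ralg. atomic_elem Ralg u \<and> atomic_elem Ralg (u * b)" by blast
qed

theorem mainTheorem12:
  shows "IDF_dom Ralg \<and> almost_atomic_dom Ralg \<and> \<not> atomic_dom Ralg \<and> \<not> FFD_dom Ralg"
  using IDF_Ralg almost_atomic_Ralg not_atomic_Ralg by (simp add: FFD_dom_def)

end
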